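(* Let $T$ be a linear operator in $H$. If there exist $z\in W_e(T)$ and $w\in\mathbb C\setminus\{0\}$ with $z+w(0,\infty)\subset W(T)$, then $z+w[0,\infty)\subset W_e(T)$.
   Context: $H$ is a separable infinite-dimensional complex Hilbert space; operators need not be closed, closable or densely defined. $W(T)=\{\langle Tx,x\rangle:x\in\operatorname{dom}(T),\|x\|=1\}$, $W_e(T)=\{\lambda:\exists x_n\in\operatorname{dom}(T),\|x_n\|=1,x_n\stackrel{w}{\to}0,\langle Tx_n,x_n\rangle\to\lambda\}$. *)

theory Defs
  imports "HOL-Analysis.Analysis"
begin

text \<open>The separable infinite-dimensional complex Hilbert space H is modelled
concretely (up to unitary equivalence) as l2(N, C): square-summable complex sequences.\<close>

definition l2 :: "(nat \<Rightarrow> complex) set" where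
  "l2 = {x. summable (\<lambda>n. (cmod (x n))\<^sup>2)}"

definition l2_inner :: "(nat \<Rightarrow> complex) \<Rightarrow> (nat \<Rightarrow> complex) \<Rightarrow> complex" where
  "l2_inner x y = (\<Sum>n. x n * cnj (y n))"

definition l2_norm :: "(nat \<Rightarrow> complex) \<Rightarrow> real" where
  "l2_norm x = sqrt (\<Sum>n. (cmod (x n))\<^sup>2)"

definition linear_operator ::
  "(nat \<Rightarrow> complex) set \<Rightarrow> ((nat \<Rightarrow> complex) \<Rightarrow> (nat \<Rightarrow> complex)) \<Rightarrow> bool" where
  "linear_operator D T \<longleftrightarrow>
     D \<subseteq> l2 \<and> (\<lambda>n. 0) \<in> D \<and>
     (\<forall>x\<in>D. \<forall>y\<in>D. (\<lambda>n. x n + y n) \<in> D) \<and>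
     (\<forall>c::complex. \<forall>x\<in>D. (\<lambda>n. c * x n) \<in> D) \<and>
     (\<forall>x\<in>D. T x \<in> l2) \<and>
     (\<forall>x\<in>D. \<forall>y\<in>D. T (\<lambda>n. x n + y n) = (\<lambda>n. T x n + T y n)) \<and>
     (\<forall>c::complex. \<forall>x\<in>D. T (\<lambda>n. c * x n) = (\<lambda>n. c * T x n))"

definition weakly_to_zero :: "(nat \<Rightarrow> (nat \<Rightarrow> complex)) \<Rightarrow> bool" where
  "weakly_to_zero x \<longleftrightarrow> (\<forall>y\<in>l2. (\<lambda>k. l2_inner (x k) y) \<longlonglongrightarrow> 0)"

definition num_range ::
  "(nat \<Rightarrow> complex) set \<Rightarrow> ((nat \<Rightarrow> complex) \<Rightarrow> (nat \<Rightarrow> complex)) \<Rightarrow> complex set" where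
  "num_range D T = {l2_inner (T x) x | x. x \<in> D \<and> l2_norm x = 1}"

definition ess_num_range ::
  "(nat \<Rightarrow> complex) set \<Rightarrow> ((nat \<Rightarrow> complex) \<Rightarrow> (nat \<Rightarrow> complex)) \<Rightarrow> complex set" where
  "ess_num_range D T = {l. \<exists>x. (\<forall>k. x k \<in> D \<and> l2_norm (x k) = 1) \<and> weakly_to_zero x \<and>
       (\<lambda>k. l2_inner (T (x k)) (x k)) \<longlonglongrightarrow> l}"

end

theory Submission
  imports Defs
begin

(* Take unit vectors x_n converging weakly to 0 with <T x_n, x_n> -> z and, for large s, a unit
   vector u with <T u, u> = z + w s. For y = x_n + beta u the form <T y, y> - lambda <y, y>,
   lambda = z + w t, divided by w equals a + cnj(beta) c + beta e + (s - t) |beta|^2, where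
   a = (<T x_n, x_n> - z)/w - t has real part close to -t and imaginary part close to 0.
   Rotating beta makes the cross terms real and nonnegative, and then a suitable |beta| cancels
   the real part, leaving an error no larger than |<T x_n, x_n> - z|; moreover
   |beta|^2 <= 2t/(s - t). Normalising y gives unit vectors whose form values tend to lambda, and
   since beta -> 0 as s -> infinity they still converge weakly to 0. *)

lemma l2_summable_square: "x \<in> l2 \<Longrightarrow> summable (\<lambda>n. (cmod (x n))\<^sup>2)"
  by (simp add: l2_def)

lemma l2_norm_square: "x \<in> l2 \<Longrightarrow> (l2_norm x)\<^sup>2 = (\<Sum>n. (cmod (x n))\<^sup>2)"
  unfolding l2_norm_def by (simp add: l2_summable_square suminf_nonneg)

lemma l2_norm_nonneg: "x \<in> l2 \<Longrightarrow> 0 \<le> l2_norm x"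
  by (simp add: l2_norm_def l2_summable_square suminf_nonneg)

lemma norm_mult_le_half_sum_squares: "cmod a * cmod b \<le> ((cmod a)\<^sup>2 + (cmod b)\<^sup>2) / 2"
  using sum_squares_bound[of "cmod a" "cmod b"] by simp

lemma l2_add:
  assumes "x \<in> l2" "y \<in> l2"
  shows "(\<lambda>n. x n + y n) \<in> l2"
proof -
  have "summable (\<lambda>n. (cmod (x n + y n))\<^sup>2)"
  proof (rule summable_comparison_test')
    show "summable (\<lambda>n. 2 * (cmod (x n))\<^sup>2 + 2 * (cmod (y n))\<^sup>2)"
      using assms by (intro summable_mult summable_add l2_summable_square)
    have "(cmod (x n + y n))\<^sup>2 \<le> (cmod (x n) + cmod (y n))\<^sup>2" for n
      by (simp add: power_mono norm_triangle_ineq)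
    also have "\<dots> n \<le> 2 * (cmod (x n))\<^sup>2 + 2 * (cmod (y n))\<^sup>2" for n
      using norm_mult_le_half_sum_squares[of "x n" "y n"] by (simp add: power2_sum)
    finally show "norm ((cmod (x n + y n))\<^sup>2) \<le> 2 * (cmod (x n))\<^sup>2 + 2 * (cmod (y n))\<^sup>2" for n
      by simp
  qed
  then show ?thesis by (simp add: l2_def)
qed

lemma l2_scale: "x \<in> l2 \<Longrightarrow> (\<lambda>n. c * x n) \<in> l2"
  using summable_mult[OF l2_summable_square, of x "(cmod c)\<^sup>2"]
  by (simp add: l2_def norm_mult power_mult_distrib)

lemma summable_l2_inner_norm:
  assumes "x \<in> l2" "y \<in> l2"
  shows "summable (\<lambda>n. norm (x n * cnj (y n)))"
proof (rule summable_comparison_test')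
  show "summable (\<lambda>n. ((cmod (x n))\<^sup>2 + (cmod (y n))\<^sup>2) / 2)"
    using assms by (intro summable_divide summable_add l2_summable_square)
  show "norm (norm (x n * cnj (y n))) \<le> ((cmod (x n))\<^sup>2 + (cmod (y n))\<^sup>2) / 2" for n
    using norm_mult_le_half_sum_squares[of "x n" "y n"] by (simp add: norm_mult)
qed

lemma summable_l2_inner: "x \<in> l2 \<Longrightarrow> y \<in> l2 \<Longrightarrow> summable (\<lambda>n. x n * cnj (y n))"
  using summable_norm_cancel[OF summable_l2_inner_norm] .

lemma norm_l2_inner_le:
  assumes "x \<in> l2" "y \<in> l2"
  shows "cmod (l2_inner x y) \<le> ((l2_norm x)\<^sup>2 + (l2_norm y)\<^sup>2) / 2"
proof -
  have sx: "summable (\<lambda>n. (cmod (x n))\<^sup>2)" and sy: "summable (\<lambda>n. (cmod (y n))\<^sup>2)"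
    using assms by (auto intro: l2_summable_square)
  have "cmod (l2_inner x y) \<le> (\<Sum>n. norm (x n * cnj (y n)))"
    unfolding l2_inner_def by (rule summable_norm[OF summable_l2_inner_norm[OF assms]])
  also have "\<dots> \<le> (\<Sum>n. ((cmod (x n))\<^sup>2 + (cmod (y n))\<^sup>2) / 2)"
    using sx sy summable_l2_inner_norm[OF assms] norm_mult_le_half_sum_squares
    by (intro suminf_le summable_divide summable_add) (auto simp: norm_mult)
  also have "\<dots> = ((l2_norm x)\<^sup>2 + (l2_norm y)\<^sup>2) / 2"
    using suminf_divide[OF summable_add[OF sx sy], of 2] suminf_add[OF sx sy]
    by (simp add: l2_norm_square assms)
  finally show ?thesis .
qed

lemma l2_inner_add_left:
  "x \<in> l2 \<Longrightarrow> y \<in> l2 \<Longrightarrow> v \<in> l2 \<Longrightarrow>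
    l2_inner (\<lambda>n. x n + y n) v = l2_inner x v + l2_inner y v"
  unfolding l2_inner_def
  by (simp add: distrib_right suminf_add[OF summable_l2_inner summable_l2_inner])

lemma l2_inner_add_right:
  "x \<in> l2 \<Longrightarrow> y \<in> l2 \<Longrightarrow> v \<in> l2 \<Longrightarrow>
    l2_inner v (\<lambda>n. x n + y n) = l2_inner v x + l2_inner v y"
  unfolding l2_inner_def
  by (simp add: distrib_left suminf_add[OF summable_l2_inner summable_l2_inner])

lemma l2_inner_scale_left:
  "x \<in> l2 \<Longrightarrow> v \<in> l2 \<Longrightarrow> l2_inner (\<lambda>n. c * x n) v = c * l2_inner x v"
  unfolding l2_inner_def by (simp add: mult.assoc suminf_mult summable_l2_inner)

lemma l2_inner_scale_right:
  "x \<in> l2 \<Longrightarrow> v \<in> l2 \<Longrightarrow> l2_inner v (\<lambda>n. c * x n) = cnj c * l2_inner v x"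
  unfolding l2_inner_def
  using suminf_mult[OF summable_l2_inner, of v x "cnj c"] by (simp add: algebra_simps)

lemma l2_inner_self:
  assumes "x \<in> l2"
  shows "l2_inner x x = complex_of_real ((l2_norm x)\<^sup>2)"
proof -
  have "l2_inner x x = (\<Sum>n. complex_of_real ((cmod (x n))\<^sup>2))"
    unfolding l2_inner_def by (simp only: complex_norm_square)
  also have "\<dots> = complex_of_real ((l2_norm x)\<^sup>2)"
    by (simp add: suminf_of_real l2_summable_square l2_norm_square assms)
  finally show ?thesis .
qed

lemma l2_inner_self_unit: "x \<in> l2 \<Longrightarrow> l2_norm x = 1 \<Longrightarrow> l2_inner x x = 1"
  by (simp add: l2_inner_self)

lemma l2_inner_add_scaled:
  assumes "a \<in> l2" "b \<in> l2" "c \<in> l2" "d \<in> l2"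
  shows "l2_inner (\<lambda>k. a k + \<beta> * b k) (\<lambda>k. c k + \<beta> * d k)
    = l2_inner a c + cnj \<beta> * l2_inner a d + \<beta> * l2_inner b c
      + complex_of_real ((cmod \<beta>)\<^sup>2) * l2_inner b d"
proof -
  have bd: "(\<lambda>k. \<beta> * b k) \<in> l2" "(\<lambda>k. \<beta> * d k) \<in> l2"
    using assms by (auto intro: l2_scale)
  have cd: "(\<lambda>k. c k + \<beta> * d k) \<in> l2"
    using l2_add[OF assms(3) bd(2)] .
  have "l2_inner (\<lambda>k. a k + \<beta> * b k) (\<lambda>k. c k + \<beta> * d k)
      = l2_inner a (\<lambda>k. c k + \<beta> * d k) + \<beta> * l2_inner b (\<lambda>k. c k + \<beta> * d k)"
    using l2_inner_add_left[OF assms(1) bd(1) cd] l2_inner_scale_left[OF assms(2) cd] by simp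
  also have "\<dots> = l2_inner a c + cnj \<beta> * l2_inner a d + \<beta> * (l2_inner b c + cnj \<beta> * l2_inner b d)"
    using assms bd by (simp add: l2_inner_add_right l2_inner_scale_right)
  finally show ?thesis
    unfolding complex_norm_square by (simp add: algebra_simps)
qed

lemma l2_inner_scale_both:
  assumes "x \<in> l2" "y \<in> l2"
  shows "l2_inner (\<lambda>k. c * x k) (\<lambda>k. c * y k) = complex_of_real ((cmod c)\<^sup>2) * l2_inner x y"
  unfolding complex_norm_square
  using assms by (simp add: l2_inner_scale_left l2_inner_scale_right l2_scale mult.assoc)

lemma l2_norm_scale:
  assumes "x \<in> l2"
  shows "l2_norm (\<lambda>k. c * x k) = cmod c * l2_norm x"
proof (rule power2_eq_imp_eq)
  have "complex_of_real ((l2_norm (\<lambda>k. c * x k))\<^sup>2) = complex_of_real ((cmod c * l2_norm x)\<^sup>2)"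
    using l2_inner_scale_both[OF assms assms, of c]
    by (simp only: l2_inner_self l2_scale assms power_mult_distrib of_real_mult)
  then show "(l2_norm (\<lambda>k. c * x k))\<^sup>2 = (cmod c * l2_norm x)\<^sup>2"
    by (simp only: of_real_eq_iff)
qed (simp_all add: l2_norm_nonneg l2_scale assms)

lemma linear_operator_subset_l2: "linear_operator D T \<Longrightarrow> D \<subseteq> l2"
  by (simp add: linear_operator_def)

lemma linear_operator_image_l2: "linear_operator D T \<Longrightarrow> x \<in> D \<Longrightarrow> T x \<in> l2"
  by (simp add: linear_operator_def)

lemma linear_operator_scale:
  assumes "linear_operator D T" "x \<in> D"
  shows "(\<lambda>k. c * x k) \<in> D" "T (\<lambda>k. c * x k) = (\<lambda>k. c * T x k)"
  using assms by (simp_all add: linear_operator_def)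

lemma linear_operator_add_scaled:
  assumes "linear_operator D T" "x \<in> D" "u \<in> D"
  shows "(\<lambda>k. x k + \<beta> * u k) \<in> D" "T (\<lambda>k. x k + \<beta> * u k) = (\<lambda>k. T x k + \<beta> * T u k)"
  using assms linear_operator_scale[OF assms(1,3)] by (simp_all add: linear_operator_def)

lemma quadratic_form_add_scaled:
  fixes \<mu> :: complex
  assumes "linear_operator D T" "x \<in> D" "u \<in> D"
  defines "q \<equiv> \<lambda>a b. l2_inner (T a) b - \<mu> * l2_inner a b"
  shows "q (\<lambda>k. x k + \<beta> * u k) (\<lambda>k. x k + \<beta> * u k)
    = q x x + cnj \<beta> * q x u + \<beta> * q u x + complex_of_real ((cmod \<beta>)\<^sup>2) * q u u"
proof -
  have "x \<in> l2" "u \<in> l2" "T x \<in> l2" "T u \<in> l2"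
    using assms linear_operator_subset_l2 linear_operator_image_l2 by blast+
  then show ?thesis
    unfolding q_def linear_operator_add_scaled(2)[OF assms(1-3)]
    by (simp add: l2_inner_add_scaled algebra_simps)
qed

lemma exists_rotation_real_nonneg:
  fixes a b :: complex
  shows "\<exists>\<zeta> g. cmod \<zeta> = 1 \<and> 0 \<le> g \<and> cnj \<zeta> * a + \<zeta> * b = complex_of_real g"
proof -
  define d where "d = a - cnj b"
  define \<zeta> where "\<zeta> = (if d = 0 then 1 else d / cmod d)"
  have \<zeta>: "cmod \<zeta> = 1"
    by (simp add: \<zeta>_def norm_divide)
  have "Im (cnj \<zeta> * a + \<zeta> * b) = Im (cnj \<zeta> * d)"
    by (simp add: d_def algebra_simps)
  also have "\<dots> = 0"
    by (auto simp: \<zeta>_def)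
  finally have real: "cnj \<zeta> * a + \<zeta> * b = complex_of_real (Re (cnj \<zeta> * a + \<zeta> * b))"
    by (simp add: complex_eq_iff)
  show ?thesis
  proof (cases "0 \<le> Re (cnj \<zeta> * a + \<zeta> * b)")
    case True
    then show ?thesis using \<zeta> real by blast
  next
    case False
    then have "cnj (- \<zeta>) * a + (- \<zeta>) * b = complex_of_real (- Re (cnj \<zeta> * a + \<zeta> * b))"
      using real by (metis minus_add_distrib complex_cnj_minus mult_minus_left of_real_minus)
    then show ?thesis using \<zeta> False
      by (metis neg_0_le_iff_le norm_minus_cancel linorder_linear)
  qed
qed

lemma exists_nonneg_root_quadratic:
  fixes a c \<tau> :: real
  assumes "0 < a" "0 \<le> c" "0 \<le> \<tau>"
  shows "\<exists>r\<ge>0. a * r\<^sup>2 + c * r = \<tau>"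
proof -
  define b where "b = sqrt (\<tau> / a)"
  have "0 \<le> b" "a * b\<^sup>2 = \<tau>"
    using assms by (simp_all add: b_def)
  then have "\<exists>r\<ge>0. r \<le> b \<and> a * r\<^sup>2 + c * r = \<tau>"
    using assms by (intro IVT) (auto intro!: continuous_intros)
  then show ?thesis by blast
qed

lemma exists_coefficient_cancelling_real_part:
  fixes a c e :: complex and \<sigma> :: real
  assumes "0 < \<sigma>" "Re a \<le> 0"
  shows "\<exists>\<beta>. \<sigma> * (cmod \<beta>)\<^sup>2 \<le> - Re a \<and>
    a + cnj \<beta> * c + \<beta> * e + complex_of_real (\<sigma> * (cmod \<beta>)\<^sup>2) = \<i> * Im a"
proof -
  obtain \<zeta> g where \<zeta>: "cmod \<zeta> = 1" and "0 \<le> g" and g: "cnj \<zeta> * c + \<zeta> * e = complex_of_real g"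
    using exists_rotation_real_nonneg by blast
  then obtain r where "0 \<le> r" and r: "\<sigma> * r\<^sup>2 + g * r = - Re a"
    using exists_nonneg_root_quadratic[of \<sigma> g "- Re a"] assms by auto
  define \<beta> where "\<beta> = complex_of_real r * \<zeta>"
  have "cmod \<beta> = r"
    using \<open>0 \<le> r\<close> \<zeta> by (simp add: \<beta>_def norm_mult)
  have "cnj \<beta> * c + \<beta> * e = complex_of_real r * (cnj \<zeta> * c + \<zeta> * e)"
    by (simp add: \<beta>_def algebra_simps)
  also have "\<dots> = complex_of_real (g * r)"
    by (simp add: g)
  finally have "a + cnj \<beta> * c + \<beta> * e + complex_of_real (\<sigma> * (cmod \<beta>)\<^sup>2)
      = a + complex_of_real (\<sigma> * r\<^sup>2 + g * r)"
    using \<open>cmod \<beta> = r\<close> by (simp add: add.assoc)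
  also have "\<dots> = a + complex_of_real (- Re a)"
    by (simp only: r)
  also have "\<dots> = \<i> * Im a"
    by (simp add: complex_eq_iff)
  finally show ?thesis
    using \<open>cmod \<beta> = r\<close> \<open>0 \<le> r\<close> \<open>0 \<le> g\<close> r
    by (metis add_increasing2 mult_nonneg_nonneg order_refl)
qed

lemma exists_perturbation_toward_ray_point:
  fixes z w :: complex and s t :: real
  assumes lin: "linear_operator D T" and D: "x \<in> D" "u \<in> D"
    and unit: "l2_norm x = 1" "l2_norm u = 1"
    and "w \<noteq> 0" "0 < t" "t < s"
    and Tu: "l2_inner (T u) u = z + w * s"
    and close: "cmod (l2_inner (T x) x - z) \<le> t * cmod w"
  shows "\<exists>\<beta>. (s - t) * (cmod \<beta>)\<^sup>2 \<le> 2 * t \<and>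
    cmod (l2_inner (T (\<lambda>k. x k + \<beta> * u k)) (\<lambda>k. x k + \<beta> * u k)
      - (z + w * t) * l2_inner (\<lambda>k. x k + \<beta> * u k) (\<lambda>k. x k + \<beta> * u k))
    \<le> cmod (l2_inner (T x) x - z)"
proof -
  define q where "q = (\<lambda>a b. l2_inner (T a) b - (z + w * t) * l2_inner a b)"
  define e where "e = l2_inner (T x) x - z"
  define a where "a = e / w - t"
  have "x \<in> l2" "u \<in> l2"
    using D lin linear_operator_subset_l2 by blast+
  then have qxx: "q x x = w * a" and quu: "q u u = w * (s - t)"
    using unit Tu \<open>w \<noteq> 0\<close> by (simp_all add: q_def e_def a_def l2_inner_self_unit field_simps)
  have "cmod (e / w) \<le> t"
    using close \<open>w \<noteq> 0\<close> by (simp add: e_def norm_divide field_simps)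
  then have "Re a \<le> 0" "- Re a \<le> 2 * t"
    using abs_Re_le_cmod[of "e / w"] by (auto simp: a_def)
  then obtain \<beta> where \<beta>: "(s - t) * (cmod \<beta>)\<^sup>2 \<le> - Re a"
    and cancel: "a + cnj \<beta> * (q x u / w) + \<beta> * (q u x / w)
      + complex_of_real ((s - t) * (cmod \<beta>)\<^sup>2) = \<i> * Im a"
    using exists_coefficient_cancelling_real_part[of "s - t" a "q x u / w" "q u x / w"] \<open>t < s\<close>
    by auto
  have "q (\<lambda>k. x k + \<beta> * u k) (\<lambda>k. x k + \<beta> * u k)
      = q x x + cnj \<beta> * q x u + \<beta> * q u x + complex_of_real ((cmod \<beta>)\<^sup>2) * q u u"
    unfolding q_def by (rule quadratic_form_add_scaled[OF lin D])
  also have "\<dots> = w * (a + cnj \<beta> * (q x u / w) + \<beta> * (q u x / w)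
        + complex_of_real ((s - t) * (cmod \<beta>)\<^sup>2))"
    using \<open>w \<noteq> 0\<close> by (simp add: qxx quu field_simps)
  also have "\<dots> = w * (\<i> * Im (e / w))"
    by (simp only: cancel) (simp add: a_def)
  finally have "cmod (q (\<lambda>k. x k + \<beta> * u k) (\<lambda>k. x k + \<beta> * u k)) = cmod w * \<bar>Im (e / w)\<bar>"
    by (simp add: norm_mult)
  also have "\<dots> \<le> cmod w * cmod (e / w)"
    by (simp add: abs_Im_le_cmod mult_left_mono)
  also have "\<dots> = cmod e"
    using \<open>w \<noteq> 0\<close> by (simp add: norm_divide)
  finally show ?thesis
    using \<beta> \<open>- Re a \<le> 2 * t\<close> unfolding q_def e_def by (meson order_trans)
qed

lemma l2_norm_add_scaled_lower_bound:
  assumes "x \<in> l2" "u \<in> l2" "l2_norm x = 1" "l2_norm u = 1"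
  shows "1 - 2 * cmod \<beta> \<le> (l2_norm (\<lambda>k. x k + \<beta> * u k))\<^sup>2"
proof -
  have inner_le: "cmod (l2_inner x u) \<le> 1" "cmod (l2_inner u x) \<le> 1"
    using norm_l2_inner_le[OF assms(1,2)] norm_l2_inner_le[OF assms(2,1)] assms(3,4) by simp_all
  have "Re (cnj \<beta> * l2_inner x u) \<ge> - cmod \<beta>" "Re (\<beta> * l2_inner u x) \<ge> - cmod \<beta>"
    using abs_Re_le_cmod[of "cnj \<beta> * l2_inner x u"] abs_Re_le_cmod[of "\<beta> * l2_inner u x"]
      mult_left_le[OF inner_le(1), of "cmod \<beta>"] mult_left_le[OF inner_le(2), of "cmod \<beta>"]
    by (simp_all add: norm_mult)
  moreover have "(l2_norm (\<lambda>k. x k + \<beta> * u k))\<^sup>2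
      = 1 + Re (cnj \<beta> * l2_inner x u) + Re (\<beta> * l2_inner u x) + (cmod \<beta>)\<^sup>2"
    using arg_cong[OF l2_inner_add_scaled[OF assms(1,2,1,2), of \<beta>], of Re]
    by (simp add: l2_inner_self l2_add l2_scale assms)
  ultimately show ?thesis
    by (smt (verit) zero_le_power2)
qed

lemma normalized_quadratic_form:
  fixes \<mu> :: complex
  assumes lin: "linear_operator D T" and "y \<in> D" "0 < l2_norm y"
  defines "y' \<equiv> \<lambda>k. complex_of_real (1 / l2_norm y) * y k"
  shows "y' \<in> D" "l2_norm y' = 1"
    "l2_inner (T y') y' - \<mu> = (l2_inner (T y) y - \<mu> * l2_inner y y) / (l2_norm y)\<^sup>2"
proof -
  have "y \<in> l2" "T y \<in> l2"
    using assms linear_operator_subset_l2 linear_operator_image_l2 by blast+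
  show "y' \<in> D"
    unfolding y'_def by (rule linear_operator_scale(1)[OF lin \<open>y \<in> D\<close>])
  show "l2_norm y' = 1"
    unfolding y'_def l2_norm_scale[OF \<open>y \<in> l2\<close>] norm_of_real using \<open>0 < l2_norm y\<close> by simp
  have "l2_inner (T y') y' = l2_inner (T y) y / (l2_norm y)\<^sup>2"
    unfolding y'_def linear_operator_scale(2)[OF lin \<open>y \<in> D\<close>]
      l2_inner_scale_both[OF \<open>T y \<in> l2\<close> \<open>y \<in> l2\<close>] norm_of_real
    by (simp add: power_divide)
  moreover have "l2_inner y y = (l2_norm y)\<^sup>2"
    by (simp add: l2_inner_self \<open>y \<in> l2\<close>)
  ultimately show "l2_inner (T y') y' - \<mu> = (l2_inner (T y) y - \<mu> * l2_inner y y) / (l2_norm y)\<^sup>2"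
    using \<open>0 < l2_norm y\<close> by (simp add: field_simps)
qed

lemma normalized_small_perturbation:
  fixes \<mu> :: complex
  assumes lin: "linear_operator D T" and D: "x \<in> D" "u \<in> D"
    and unit: "l2_norm x = 1" "l2_norm u = 1" and "cmod \<beta> \<le> 1 / 4"
  defines "y \<equiv> \<lambda>k. x k + \<beta> * u k"
  assumes err: "cmod (l2_inner (T y) y - \<mu> * l2_inner y y) \<le> E"
  shows "\<exists>c. \<bar>c\<bar> \<le> 2 \<and> (\<lambda>k. complex_of_real c * y k) \<in> D \<and>
    l2_norm (\<lambda>k. complex_of_real c * y k) = 1 \<and>
    cmod (l2_inner (T (\<lambda>k. complex_of_real c * y k)) (\<lambda>k. complex_of_real c * y k) - \<mu>) \<le> 2 * E"
proof -
  have "x \<in> l2" "u \<in> l2"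
    using lin D linear_operator_subset_l2 by auto
  then have "y \<in> l2"
    unfolding y_def by (intro l2_add l2_scale)
  have "y \<in> D"
    unfolding y_def by (rule linear_operator_add_scaled(1)[OF lin D])
  have "1 / 2 \<le> (l2_norm y)\<^sup>2"
    using l2_norm_add_scaled_lower_bound[OF \<open>x \<in> l2\<close> \<open>u \<in> l2\<close> unit, of \<beta>] \<open>cmod \<beta> \<le> 1 / 4\<close>
    unfolding y_def by linarith
  then have "1 / 2 \<le> l2_norm y"
    using l2_norm_nonneg[OF \<open>y \<in> l2\<close>] power2_le_imp_le[of "1 / 2" "l2_norm y"]
    by (simp add: power_one_over)
  then have "\<bar>1 / l2_norm y\<bar> \<le> 2"
    by (simp add: divide_le_eq)
  have "cmod (l2_inner (T y) y - \<mu> * l2_inner y y) / (l2_norm y)\<^sup>2 \<le> E / (1 / 2)"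
    using err order_trans[OF norm_ge_zero err] \<open>1 / 2 \<le> (l2_norm y)\<^sup>2\<close> by (intro frac_le) auto
  with normalized_quadratic_form(1,2)[OF lin \<open>y \<in> D\<close>]
    normalized_quadratic_form(3)[OF lin \<open>y \<in> D\<close>, of \<mu>] \<open>1 / 2 \<le> l2_norm y\<close>
    \<open>\<bar>1 / l2_norm y\<bar> \<le> 2\<close> show ?thesis
    by (intro exI[of _ "1 / l2_norm y"]) (simp add: norm_divide norm_power)
qed

lemma ray_point_approximant:
  fixes z w :: complex and t \<epsilon> :: real
  assumes lin: "linear_operator D T"
    and x: "\<And>k. x k \<in> D" "\<And>k. l2_norm (x k) = 1"
    and conv: "(\<lambda>k. l2_inner (T (x k)) (x k)) \<longlonglongrightarrow> z"
    and ray: "\<And>s. 0 < s \<Longrightarrow> z + w * complex_of_real s \<in> num_range D T"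
    and "w \<noteq> 0" "0 < t" "0 < \<epsilon>"
  shows "\<exists>y n \<beta> u c. y = (\<lambda>k. complex_of_real c * (x n k + \<beta> * u k)) \<and>
    y \<in> D \<and> l2_norm y = 1 \<and> cmod (l2_inner (T y) y - (z + w * t)) < \<epsilon> \<and>
    n0 \<le> n \<and> cmod \<beta> < \<epsilon> \<and> u \<in> l2 \<and> l2_norm u = 1 \<and> \<bar>c\<bar> \<le> 2"
proof -
  \<comment> \<open>s makes the perturbation coefficient at most \<rho>; \<delta> \<le> \<epsilon>/4 absorbs the factor 2 lost in normalising\<close>
  define \<rho> where "\<rho> = min (\<epsilon> / 2) (1 / 4)"
  define s where "s = t + 2 * t / \<rho>\<^sup>2"
  have "0 < \<rho>" "\<rho> < \<epsilon>" "\<rho> \<le> 1 / 4"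
    using \<open>0 < \<epsilon>\<close> by (auto simp: \<rho>_def)
  then have "t < s" "(s - t) * \<rho>\<^sup>2 = 2 * t"
    using \<open>0 < t\<close> by (simp_all add: s_def)
  obtain u where "u \<in> D" "l2_norm u = 1" and Tu: "l2_inner (T u) u = z + w * s"
    using ray[of s] \<open>0 < t\<close> \<open>t < s\<close> unfolding num_range_def by auto
  define \<delta> where "\<delta> = min (t * cmod w) (\<epsilon> / 4)"
  have "0 < \<delta>"
    using \<open>w \<noteq> 0\<close> \<open>0 < t\<close> \<open>0 < \<epsilon>\<close> by (simp add: \<delta>_def)
  then have "\<forall>\<^sub>F k in sequentially. n0 \<le> k \<and> dist (l2_inner (T (x k)) (x k)) z < \<delta>"
    using conv eventually_ge_at_top by (auto simp: tendsto_iff intro: eventually_conj)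
  then obtain n where "n0 \<le> n" and close: "cmod (l2_inner (T (x n)) (x n) - z) < \<delta>"
    by (auto simp: eventually_sequentially dist_norm)
  have xn: "x n \<in> D" "l2_norm (x n) = 1"
    using x by simp_all
  have "cmod (l2_inner (T (x n)) (x n) - z) \<le> t * cmod w"
    using close by (simp add: \<delta>_def)
  then obtain \<beta> where "(s - t) * (cmod \<beta>)\<^sup>2 \<le> 2 * t"
    and err: "cmod (l2_inner (T (\<lambda>k. x n k + \<beta> * u k)) (\<lambda>k. x n k + \<beta> * u k)
      - (z + w * t) * l2_inner (\<lambda>k. x n k + \<beta> * u k) (\<lambda>k. x n k + \<beta> * u k))
      \<le> cmod (l2_inner (T (x n)) (x n) - z)"
    using exists_perturbation_toward_ray_point[OF lin xn(1) \<open>u \<in> D\<close> xn(2) \<open>l2_norm u = 1\<close>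
        \<open>w \<noteq> 0\<close> \<open>0 < t\<close> \<open>t < s\<close> Tu]
    by blast
  then have "(s - t) * (cmod \<beta>)\<^sup>2 \<le> (s - t) * \<rho>\<^sup>2"
    using \<open>(s - t) * \<rho>\<^sup>2 = 2 * t\<close> by simp
  then have "(cmod \<beta>)\<^sup>2 \<le> \<rho>\<^sup>2"
    using \<open>t < s\<close> mult_le_cancel_left_pos[of "s - t"] by simp
  then have "cmod \<beta> \<le> \<rho>"
    using power2_le_imp_le \<open>0 < \<rho>\<close> by simp
  moreover have "2 * cmod (l2_inner (T (x n)) (x n) - z) < \<epsilon>"
    using close by (simp add: \<delta>_def) (smt (verit) norm_ge_zero)
  ultimately obtain c where "\<bar>c\<bar> \<le> 2"
    and "(\<lambda>k. complex_of_real c * (x n k + \<beta> * u k)) \<in> D"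
    and "l2_norm (\<lambda>k. complex_of_real c * (x n k + \<beta> * u k)) = 1"
    and "cmod (l2_inner (T (\<lambda>k. complex_of_real c * (x n k + \<beta> * u k)))
        (\<lambda>k. complex_of_real c * (x n k + \<beta> * u k)) - (z + w * t)) < \<epsilon>"
    using normalized_small_perturbation[OF lin xn(1) \<open>u \<in> D\<close> xn(2) \<open>l2_norm u = 1\<close>, of \<beta>]
      err \<open>\<rho> \<le> 1 / 4\<close> by fastforce
  then show ?thesis
    using \<open>n0 \<le> n\<close> \<open>cmod \<beta> \<le> \<rho>\<close> \<open>\<rho> < \<epsilon>\<close> \<open>u \<in> D\<close> \<open>l2_norm u = 1\<close>
      lin linear_operator_subset_l2
    by (intro exI[of _ "\<lambda>k. complex_of_real c * (x n k + \<beta> * u k)"] exI[of _ n] exI[of _ \<beta>]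
        exI[of _ u] exI[of _ c]) auto
qed

lemma weakly_to_zero_perturbed:
  assumes x: "weakly_to_zero x" "\<And>k. x k \<in> l2"
    and N: "filterlim N sequentially sequentially"
    and \<beta>: "\<beta> \<longlonglongrightarrow> 0"
    and u: "\<And>m. u m \<in> l2" "\<And>m. l2_norm (u m) = 1"
    and c: "\<And>m. \<bar>c m\<bar> \<le> K"
  shows "weakly_to_zero (\<lambda>m k. complex_of_real (c m) * (x (N m) k + \<beta> m * u m k))"
  unfolding weakly_to_zero_def
proof
  fix v assume "v \<in> l2"
  define B where "B = (1 + (l2_norm v)\<^sup>2) / 2"
  have bound: "cmod (l2_inner (\<lambda>k. complex_of_real (c m) * (x (N m) k + \<beta> m * u m k)) v)
      \<le> K * (cmod (l2_inner (x (N m)) v) + cmod (\<beta> m) * B)" for m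
  proof -
    have "l2_inner (\<lambda>k. complex_of_real (c m) * (x (N m) k + \<beta> m * u m k)) v
        = c m * (l2_inner (x (N m)) v + \<beta> m * l2_inner (u m) v)"
      using x(2) u(1) \<open>v \<in> l2\<close>
      by (simp add: l2_inner_scale_left l2_inner_add_left l2_add l2_scale)
    moreover have "cmod (l2_inner (u m) v) \<le> B"
      using norm_l2_inner_le[OF u(1) \<open>v \<in> l2\<close>] u(2) by (simp add: B_def)
    then have "cmod (l2_inner (x (N m)) v + \<beta> m * l2_inner (u m) v)
        \<le> cmod (l2_inner (x (N m)) v) + cmod (\<beta> m) * B"
      by (metis norm_triangle_le add_left_mono mult_left_mono norm_ge_zero norm_mult)
    ultimately show ?thesis
      using c[of m] by (simp add: norm_mult mult_mono)
  qed
  have lim: "(\<lambda>m. K * (cmod (l2_inner (x (N m)) v) + cmod (\<beta> m) * B)) \<longlonglongrightarrow> 0"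
  proof -
    have "(\<lambda>m. l2_inner (x (N m)) v) \<longlonglongrightarrow> 0"
      using filterlim_compose[OF _ N] x(1) \<open>v \<in> l2\<close> unfolding weakly_to_zero_def by blast
    then have "(\<lambda>m. cmod (l2_inner (x (N m)) v) + cmod (\<beta> m) * B) \<longlonglongrightarrow> 0"
      by (intro tendsto_add_zero tendsto_norm_zero tendsto_mult_left_zero tendsto_norm_zero[OF \<beta>])
    then show ?thesis
      by (rule tendsto_mult_right_zero)
  qed
  show "(\<lambda>m. l2_inner (\<lambda>k. complex_of_real (c m) * (x (N m) k + \<beta> m * u m k)) v)
      \<longlonglongrightarrow> 0"
    by (rule Lim_null_comparison[OF always_eventually[OF allI[OF bound]] lim])
qed

lemma ess_num_range_ray_point:
  fixes z w :: complex and t :: real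
  assumes lin: "linear_operator D T" and z: "z \<in> ess_num_range D T"
    and ray: "\<And>s. 0 < s \<Longrightarrow> z + w * complex_of_real s \<in> num_range D T"
    and "w \<noteq> 0" "0 < t"
  shows "z + w * complex_of_real t \<in> ess_num_range D T"
proof -
  obtain x where x: "\<And>k. x k \<in> D" "\<And>k. l2_norm (x k) = 1" and "weakly_to_zero x"
    and conv: "(\<lambda>k. l2_inner (T (x k)) (x k)) \<longlonglongrightarrow> z"
    using z unfolding ess_num_range_def by blast
  have "\<forall>m. \<exists>y n \<beta> u c. y = (\<lambda>k. complex_of_real c * (x n k + \<beta> * u k)) \<and>
    y \<in> D \<and> l2_norm y = 1 \<and> cmod (l2_inner (T y) y - (z + w * t)) < 1 / real (Suc m) \<and>
    m \<le> n \<and> cmod \<beta> < 1 / real (Suc m) \<and> u \<in> l2 \<and> l2_norm u = 1 \<and> \<bar>c\<bar> \<le> 2"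
    using ray_point_approximant[OF lin x conv ray \<open>w \<noteq> 0\<close> \<open>0 < t\<close>] by force
  then obtain Y N \<beta> u c where Y: "\<And>m. Y m = (\<lambda>k. complex_of_real (c m) * (x (N m) k + \<beta> m * u m k))"
    and "\<And>m. Y m \<in> D" "\<And>m. l2_norm (Y m) = 1"
    and close: "\<And>m. cmod (l2_inner (T (Y m)) (Y m) - (z + w * t)) < 1 / real (Suc m)"
    and "\<And>m. m \<le> N m" "\<And>m. cmod (\<beta> m) < 1 / real (Suc m)"
    and "\<And>m. u m \<in> l2" "\<And>m. l2_norm (u m) = 1" "\<And>m. \<bar>c m\<bar> \<le> 2"
    unfolding choice_iff by blast
  have "filterlim N sequentially sequentially"
    using \<open>\<And>m. m \<le> N m\<close> by (intro filterlim_at_top_mono[OF filterlim_ident]) auto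
  moreover have "\<beta> \<longlonglongrightarrow> 0"
    using \<open>\<And>m. cmod (\<beta> m) < 1 / real (Suc m)\<close> by (rule LIMSEQ_norm_0)
  moreover have "\<And>k. x k \<in> l2"
    using x(1) lin linear_operator_subset_l2 by blast
  ultimately have "weakly_to_zero Y"
    using weakly_to_zero_perturbed[OF \<open>weakly_to_zero x\<close>] \<open>\<And>m. u m \<in> l2\<close>
      \<open>\<And>m. l2_norm (u m) = 1\<close> \<open>\<And>m. \<bar>c m\<bar> \<le> 2\<close>
    unfolding Y[abs_def] by blast
  moreover have "(\<lambda>m. l2_inner (T (Y m)) (Y m)) \<longlonglongrightarrow> z + w * t"
    using LIMSEQ_norm_0[OF close] by (rule LIM_zero_cancel)
  ultimately show ?thesis
    using \<open>\<And>m. Y m \<in> D\<close> \<open>\<And>m. l2_norm (Y m) = 1\<close> unfolding ess_num_range_def by blast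
qed

theorem proposition2p4:
  fixes D :: "(nat \<Rightarrow> complex) set"
    and T :: "(nat \<Rightarrow> complex) \<Rightarrow> (nat \<Rightarrow> complex)"
    and z w :: complex
  assumes "linear_operator D T"
    and "z \<in> ess_num_range D T"
    and "w \<noteq> 0"
    and "{z + w * complex_of_real t | t. t > 0} \<subseteq> num_range D T"
  shows "{z + w * complex_of_real t | t. t \<ge> 0} \<subseteq> ess_num_range D T"
proof safe
  fix t :: real
  assume "0 \<le> t"
  have ray: "z + w * complex_of_real s \<in> num_range D T" if "0 < s" for s
    using assms(4) that by blast
  show "z + w * complex_of_real t \<in> ess_num_range D T"
  proof (cases "t = 0")
    case True
    then show ?thesis using assms(2) by simp
  next
    case False
    with \<open>0 \<le> t\<close> show ?thesis
      using ess_num_range_ray_point[OF assms(1,2) ray assms(3)] by simp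
  qed
qed

end
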